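(* Let $K\subset\mathbb{R}$ be a compact set with $\mathrm{conv}(K)=[a,b]$, and suppose there exists $\varepsilon>0$ such that $[a,a+\varepsilon]\cup[b-\varepsilon,b]\subset K$. Then there exists an index $\ell\in\mathbb{N}$, depending only on $\varepsilon$ and $b-a$, such that \[\frac{1}{2^\ell}\sum_{j=1}^{2^\ell}K=\frac{1}{2^{\ell+k}}\sum_{j=1}^{2^{\ell+k}}K\quad\text{for every }k\in\mathbb{N}.\] Moreover, $\ell$ increases with $b-a$ and decreases as $\varepsilon$ increases.
   Context: $\sum_{j=1}^N K$ denotes the Minkowski sum $K+\cdots+K$ ($N$ copies), where $X+Y=\{x+y:x\in X,y\in Y\}$, and $tX=\{tx:x\in X\}$. $\mathrm{conv}$ denotes convex hull. *)

theory Defs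
  imports "HOL-Analysis.Analysis"
begin

definition msum :: "real set \<Rightarrow> real set \<Rightarrow> real set" where
  "msum X Y = {x + y | x y. x \<in> X \<and> y \<in> Y}"

fun msum_pow :: "nat \<Rightarrow> real set \<Rightarrow> real set" where
  "msum_pow 0 K = {0}"
| "msum_pow (Suc n) K = msum K (msum_pow n K)"

definition dil :: "real \<Rightarrow> real set \<Rightarrow> real set" where
  "dil t X = (\<lambda>x. t * x) ` X"

end

theory Submission
  imports Defs "HOL-Library.Interval"
begin

text \<open>If \<open>K \<subseteq> [a,b]\<close> contains the end pieces \<open>[a,a+\<epsilon>]\<close> and \<open>[b-\<epsilon>,b]\<close>, then the
  \<open>N\<close>-fold sum of \<open>K\<close> contains, for every \<open>j \<le> N\<close>, the sum of \<open>j\<close> copies of \<open>[b-\<epsilon>,b]\<close>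
  and \<open>N-j\<close> copies of \<open>[a,a+\<epsilon>]\<close>, an interval of length \<open>N\<epsilon>\<close> starting at
  \<open>Na + j(b-a-\<epsilon>)\<close>. Once \<open>b - a \<le> N\<epsilon>\<close>, the offset \<open>b-a-\<epsilon>\<close> between consecutive
  intervals is less than their length, so together they cover \<open>[Na,Nb]\<close> and
  \<open>(1/N)(K + \<dots> + K) = [a,b]\<close>. Taking \<open>N = 2\<^sup>\<ell>\<close> with \<open>\<ell>\<close> the least index such that
  \<open>b - a \<le> 2\<^sup>\<ell>\<epsilon>\<close>, every larger power of two works as well.\<close>

lemma msum_eq_set_plus: "msum A B = A + B"
  unfolding msum_def set_plus_def by blast

lemma msum_pow_mono: "K \<subseteq> K' \<Longrightarrow> msum_pow n K \<subseteq> msum_pow n K'"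
  by (induction n) (simp_all add: msum_eq_set_plus set_plus_mono2)

lemma msum_pow_add: "msum_pow m K + msum_pow n K = msum_pow (m + n) K"
  by (induction m) (simp_all add: msum_eq_set_plus add.assoc)

lemma msum_pow_atLeastAtMost:
  fixes p q :: real
  assumes "p \<le> q"
  shows "msum_pow n {p..q} = {real n * p..real n * q}"
proof (induction n)
  case 0
  show ?case by simp
next
  case (Suc n)
  have "real n * p \<le> real n * q"
    using assms by (simp add: mult_left_mono)
  with Suc assms show ?case
    by (simp add: msum_eq_set_plus Icc_plus_Icc algebra_simps)
qed

lemma overlapping_intervals_cover:
  fixes c w t :: real
  assumes "c \<le> w" "0 \<le> t" "t \<le> real N * c + w"
  shows "\<exists>j\<le>N. real j * c \<le> t \<and> t \<le> real j * c + w"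
  using assms(3)
proof (induction N)
  case 0
  with assms(2) show ?case by simp
next
  case (Suc N)
  show ?case
  proof (cases "t \<le> real N * c + w")
    case True
    with Suc.IH show ?thesis by (meson le_SucI)
  next
    case False
    with Suc.prems assms(1) show ?thesis
      by (intro exI[of _ "Suc N"]) (auto simp: algebra_simps)
  qed
qed

lemma msum_pow_eq_atLeastAtMost:
  fixes K :: "real set" and a b e :: real
  assumes ends: "{a..a + e} \<union> {b - e..b} \<subseteq> K" and K: "K \<subseteq> {a..b}"
    and e: "0 < e" and N: "b - a \<le> real N * e"
  shows "msum_pow N K = {real N * a..real N * b}"
proof
  have "a + e \<in> K"
    using ends e by auto
  with K have "a + e \<le> b"
    by auto
  then show "msum_pow N K \<subseteq> {real N * a..real N * b}"
    using msum_pow_mono[OF K, of N] e by (simp add: msum_pow_atLeastAtMost)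
  show "{real N * a..real N * b} \<subseteq> msum_pow N K"
  proof
    fix x assume x: "x \<in> {real N * a..real N * b}"
    define c where "c = b - a - e"
    have "c \<le> real N * e" "0 \<le> x - real N * a" "x - real N * a \<le> real N * c + real N * e"
      using N x e by (auto simp: c_def algebra_simps)
    then obtain j where "j \<le> N" "real j * c \<le> x - real N * a"
      "x - real N * a \<le> real j * c + real N * e"
      using overlapping_intervals_cover by blast
    then have "x \<in> {real j * (b - e) + real (N - j) * a..real j * b + real (N - j) * (a + e)}"
      by (simp add: c_def algebra_simps)
    also have "\<dots> = msum_pow j {b - e..b} + msum_pow (N - j) {a..a + e}"
      using e by (simp add: msum_pow_atLeastAtMost Icc_plus_Icc mult_left_mono)
    also have "\<dots> \<subseteq> msum_pow j K + msum_pow (N - j) K"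
      using ends by (intro set_plus_mono2 msum_pow_mono) auto
    also have "\<dots> = msum_pow N K"
      using \<open>j \<le> N\<close> by (simp add: msum_pow_add)
    finally show "x \<in> msum_pow N K" .
  qed
qed

lemma dil_msum_pow_eq_atLeastAtMost:
  fixes K :: "real set" and a b e :: real
  assumes "{a..a + e} \<union> {b - e..b} \<subseteq> K" "K \<subseteq> {a..b}" "0 < e" "b - a \<le> real N * e" "0 < N"
  shows "dil (1 / real N) (msum_pow N K) = {a..b}"
  using assms by (simp add: msum_pow_eq_atLeastAtMost dil_def)

definition doubling_index :: "real \<Rightarrow> real \<Rightarrow> nat" where
  "doubling_index e d = (LEAST n. d \<le> 2 ^ n * e)"

lemma le_two_power_doubling_index:
  fixes e d :: real
  assumes "0 < e"
  shows "d \<le> 2 ^ doubling_index e d * e"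
proof -
  obtain n :: nat where "d / e < 2 ^ n"
    using real_arch_pow[of 2 "d / e"] by auto
  with assms have "d \<le> 2 ^ n * e"
    by (simp add: field_simps)
  then show ?thesis
    unfolding doubling_index_def by (rule LeastI)
qed

lemma doubling_index_le_iff:
  fixes e d :: real
  assumes "0 < e"
  shows "doubling_index e d \<le> n \<longleftrightarrow> d \<le> 2 ^ n * e"
proof
  assume "doubling_index e d \<le> n"
  with assms have "2 ^ doubling_index e d * e \<le> 2 ^ n * e"
    by simp
  with le_two_power_doubling_index[OF assms, of d] show "d \<le> 2 ^ n * e"
    by (rule order_trans)
next
  assume "d \<le> 2 ^ n * e"
  then show "doubling_index e d \<le> n"
    unfolding doubling_index_def by (rule Least_le)
qed

lemma doubling_index_mono:
  fixes e d d' :: real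
  assumes "0 < e" "d \<le> d'"
  shows "doubling_index e d \<le> doubling_index e d'"
  using le_two_power_doubling_index[OF assms(1), of d'] assms
  by (simp add: doubling_index_le_iff)

lemma doubling_index_antimono:
  fixes e e' d :: real
  assumes "0 < e" "e \<le> e'"
  shows "doubling_index e' d \<le> doubling_index e d"
proof -
  have "2 ^ doubling_index e d * e \<le> 2 ^ doubling_index e d * e'"
    using assms(2) by simp
  with le_two_power_doubling_index[OF assms(1), of d] have "d \<le> 2 ^ doubling_index e d * e'"
    by (rule order_trans)
  with assms show ?thesis
    by (simp add: doubling_index_le_iff)
qed

theorem lemma14:
  shows "\<exists>L :: real \<Rightarrow> real \<Rightarrow> nat.
     (\<forall>(K :: real set) a b \<epsilon>.
        compact K \<longrightarrow> convex hull K = {a..b} \<longrightarrow> \<epsilon> > 0 \<longrightarrow>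
        {a..a+\<epsilon>} \<union> {b-\<epsilon>..b} \<subseteq> K \<longrightarrow>
        (\<forall>k::nat. dil (1 / 2 ^ L \<epsilon> (b - a)) (msum_pow (2 ^ L \<epsilon> (b - a)) K) =
                   dil (1 / 2 ^ (L \<epsilon> (b - a) + k)) (msum_pow (2 ^ (L \<epsilon> (b - a) + k)) K)))
   \<and> (\<forall>\<epsilon> d d'. 0 < \<epsilon> \<longrightarrow> \<epsilon> \<le> d \<longrightarrow> d \<le> d' \<longrightarrow> L \<epsilon> d \<le> L \<epsilon> d')
   \<and> (\<forall>\<epsilon> \<epsilon>' d. 0 < \<epsilon> \<longrightarrow> \<epsilon> \<le> \<epsilon>' \<longrightarrow> \<epsilon>' \<le> d \<longrightarrow> L \<epsilon>' d \<le> L \<epsilon> d)"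
proof (intro exI[of _ doubling_index] conjI allI impI)
  fix K :: "real set" and a b e :: real and k :: nat
  assume "compact K" and hull: "convex hull K = {a..b}" and e: "0 < e"
    and ends: "{a..a + e} \<union> {b - e..b} \<subseteq> K"
  have K: "K \<subseteq> {a..b}"
    using hull_subset[of K convex] hull by simp
  have "dil (1 / 2 ^ n) (msum_pow (2 ^ n) K) = {a..b}" if "doubling_index e (b - a) \<le> n" for n
    using dil_msum_pow_eq_atLeastAtMost[OF ends K e, of "2 ^ n"] that
    by (simp add: doubling_index_le_iff[OF e])
  from this[of "doubling_index e (b - a)"] this[of "doubling_index e (b - a) + k"]
  show "dil (1 / 2 ^ doubling_index e (b - a)) (msum_pow (2 ^ doubling_index e (b - a)) K) =
      dil (1 / 2 ^ (doubling_index e (b - a) + k)) (msum_pow (2 ^ (doubling_index e (b - a) + k)) K)"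
    by simp
qed (auto intro: doubling_index_mono doubling_index_antimono)

end
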